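(* Let $V$ be a vertex operator algebra of central charge $C$ as described in the context, with $d=\dim V^{(1)}>0$, basis $\{u_\alpha\}$ of $V^{(1)}$ and dual basis $\{u^\alpha\}$ ($\langle u^\alpha,u_\beta\rangle=\delta^\alpha_\beta$). For $a,b\in V^{(1)}$ let $F(a,b;x,y)=\sum_\alpha\langle a,Y(u^\alpha,x)Y(u_\alpha,y)b\rangle$, which is (the expansion in $|x|>|y|$ of) a rational function $G(a,b;x,y)/(x^2y^2(x-y)^2)$ with $G$ a homogeneous symmetric polynomial of degree $4$ in $x,y$, written as $$G(a,b;x,y)=P(a,b)x^2y^2+Q(a,b)xy(x-y)^2+R(a,b)(x-y)^4.$$ Then $$P(a,b)=-d\langle a,b\rangle,\qquad Q(a,b)=K(a,b)-2\langle a,b\rangle,\qquad R(a,b)=-\langle a,b\rangle,$$ where $K(a,b)=\mathrm{Tr}_{V^{(1)}}(a_0b_0)$.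
   Context: A vertex operator algebra (VOA) $V=\bigoplus_{k\ge0}V^{(k)}$ is $\mathbb Z$-graded with $\dim V^{(k)}<\infty$, $V^{(0)}=\mathbb C\mathbf 1$, and for each $a\in V^{(k)}$ a vertex operator $Y(a,z)=\sum_{n\in\mathbb Z}a_nz^{-n-k}$ with $a_{-k}\mathbf 1=a$, $Y(\mathbf 1,z)=\mathrm{Id}_V$; there is a conformal vector $\omega\in V^{(2)}$ with $Y(\omega,z)=\sum_nL_nz^{-n-2}$, the $L_n$ satisfying the Virasoro algebra of central charge $C$, $L_0$ acting on $V^{(k)}$ as $k$, $Y(L_{-1}a,z)=\partial_zY(a,z)$, and locality holds. It is assumed that $L_1v=0$ for all $v\in V^{(1)}$ and that $V$ carries the Li–Zamolodchikov metric: the unique symmetric invariant bilinear form with $\langle\mathbf 1,\mathbf 1\rangle=1$ and $\langle Y(e^{zL_1}(-z^{-2})^{L_0}c,1/z)a,b\rangle=\langle a,Y(c,z)b\rangle$ for all $a,b,c\in V$, assumed non-degenerate. $V^{(1)}$ is a Lie algebra under $[a,b]=a_0b$, and $K$ is its Killing form $K(a,b)=\mathrm{Tr}_{V^{(1)}}(\mathrm{ad}(a)\mathrm{ad}(b))$, $\mathrm{ad}(a)=a_0|_{V^{(1)}}$. *)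

theory Defs
  imports Complex_Main
begin

text \<open>Vertex operators are
given by their modes in the standard (weight-independent) indexing
  Y(a,z) = sum_n a_(n) z^(-n-1),   md a n = a_(n).
For a of weight k the paper's modes are a_n = a_(n+k-1); for k = 1 both agree.\<close>

definition wt_space :: "(complex \<Rightarrow> 'v \<Rightarrow> 'v) \<Rightarrow> ('v \<Rightarrow> 'v) \<Rightarrow> int \<Rightarrow> 'v set" where
  "wt_space sc L0 k = {v. L0 v = sc (of_int k) v}"

definition Vir :: "('v \<Rightarrow> int \<Rightarrow> 'v \<Rightarrow> 'v) \<Rightarrow> 'v \<Rightarrow> int \<Rightarrow> 'v \<Rightarrow> 'v" where
  "Vir md om n = md om (n + 1)"

definition is_VOA ::
  "(complex \<Rightarrow> 'v::ab_group_add \<Rightarrow> 'v) \<Rightarrow> ('v \<Rightarrow> int \<Rightarrow> 'v \<Rightarrow> 'v) \<Rightarrow> 'v \<Rightarrow> 'v \<Rightarrow> complex \<Rightarrow> bool"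
  where
  "is_VOA sc md one om C \<longleftrightarrow>
     vector_space sc \<and>
     \<comment> \<open>bilinearity of the modes\<close>
     (\<forall>a n. Vector_Spaces.linear sc sc (md a n)) \<and>
     (\<forall>n b. Vector_Spaces.linear sc sc (\<lambda>a. md a n b)) \<and>
     \<comment> \<open>truncation: Y(a,z)b has finitely many negative powers\<close>
     (\<forall>a b. \<exists>N. \<forall>n\<ge>N. md a n b = 0) \<and>
     \<comment> \<open>vacuum: Y(1,z) = Id, Y(a,z)1 = a + O(z)\<close>
     (\<forall>n v. md one n v = (if n = -1 then v else 0)) \<and>
     (\<forall>a. md a (-1) one = a) \<and>
     (\<forall>a n. n \<ge> 0 \<longrightarrow> md a n one = 0) \<and>
     \<comment> \<open>locality: (x-y)^N [Y(a,x),Y(b,y)] = 0, coefficientwise\<close>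
     (\<forall>a b. \<exists>N::nat. \<forall>m n c.
        (\<Sum>i\<le>N. sc ((-1)^i * of_nat (N choose i))
           (md a (m + int N - int i) (md b (n + int i) c)
            - md b (n + int i) (md a (m + int N - int i) c))) = 0) \<and>
     \<comment> \<open>conformal vector of weight 2 and the Virasoro algebra of central charge C\<close>
     om \<in> wt_space sc (Vir md om 0) 2 \<and>
     (\<forall>m n v. Vir md om m (Vir md om n v) - Vir md om n (Vir md om m v)
        = sc (of_int (m - n)) (Vir md om (m + n) v)
          + sc (if m + n = 0 then (of_int m ^ 3 - of_int m) / 12 * C else 0) v) \<and>
     \<comment> \<open>L_{-1}-derivative property and L_{-1}-, L_0-commutators\<close>
     (\<forall>a n v. md (Vir md om (-1) a) n v = sc (- of_int n) (md a (n - 1) v)) \<and>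
     (\<forall>a n v. Vir md om (-1) (md a n v) - md a n (Vir md om (-1) v)
        = sc (- of_int n) (md a (n - 1) v)) \<and>
     (\<forall>k a n v. a \<in> wt_space sc (Vir md om 0) k \<longrightarrow>
        Vir md om 0 (md a n v) - md a n (Vir md om 0 v) = sc (of_int (k - n - 1)) (md a n v)) \<and>
     \<comment> \<open>grading: V = sum of L_0-eigenspaces V^(k), k \<ge> 0, finite-dimensional, V^(0) = C 1\<close>
     (\<forall>v. v \<in> module.span sc (\<Union>k::nat. wt_space sc (Vir md om 0) (int k))) \<and>
     (\<forall>k::nat. \<exists>B. finite B \<and> wt_space sc (Vir md om 0) (int k) \<subseteq> module.span sc B) \<and>
     wt_space sc (Vir md om 0) 0 = {sc c one | c. True}"

text \<open>The Li--Zamolodchikov metric: symmetric bilinear, normalised, invariant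
(mode form of the invariance identity for homogeneous c), non-degenerate.\<close>
definition is_LZ_metric ::
  "(complex \<Rightarrow> 'v::ab_group_add \<Rightarrow> 'v) \<Rightarrow> ('v \<Rightarrow> int \<Rightarrow> 'v \<Rightarrow> 'v) \<Rightarrow> 'v \<Rightarrow> 'v
     \<Rightarrow> ('v \<Rightarrow> 'v \<Rightarrow> complex) \<Rightarrow> bool" where
  "is_LZ_metric sc md one om bf \<longleftrightarrow>
     (\<forall>x y z. bf (x + y) z = bf x z + bf y z) \<and>
     (\<forall>c x y. bf (sc c x) y = c * bf x y) \<and>
     (\<forall>x y. bf x y = bf y x) \<and>
     bf one one = 1 \<and>
     (\<forall>k::nat. \<forall>c. c \<in> wt_space sc (Vir md om 0) (int k) \<longrightarrow> (\<forall>m a b.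
        bf a (md c m b) =
          (-1) ^ k * (\<Sum>j\<le>k. bf (md ((Vir md om 1 ^^ j) c) (2 * int k - int j - m - 2) a) b
                                / of_nat (fact j)))) \<and>
     (\<forall>x. (\<forall>y. bf x y = 0) \<longrightarrow> x = 0)"

definition trace_on :: "(complex \<Rightarrow> 'v::ab_group_add \<Rightarrow> 'v) \<Rightarrow> 'v set \<Rightarrow> ('v \<Rightarrow> 'v) \<Rightarrow> complex" where
  "trace_on sc W f =
     (let B = (SOME B. finite B \<and> \<not> module.dependent sc B \<and> module.span sc B = W)
      in \<Sum>u\<in>B. module.representation sc B (f u) u)"

definition killing :: "(complex \<Rightarrow> 'v::ab_group_add \<Rightarrow> 'v) \<Rightarrow> ('v \<Rightarrow> int \<Rightarrow> 'v \<Rightarrow> 'v) \<Rightarrow> 'v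
     \<Rightarrow> 'v \<Rightarrow> 'v \<Rightarrow> complex" where
  "killing sc md om a b = trace_on sc (wt_space sc (Vir md om 0) 1) (\<lambda>v. md a 0 (md b 0 v))"

text \<open>Coefficient of x^i y^j in F(a,b;x,y) = sum_alpha <a, Y(u^alpha,x) Y(u_alpha,y) b>.\<close>
definition F_coeff :: "('v \<Rightarrow> 'v \<Rightarrow> complex) \<Rightarrow> ('v \<Rightarrow> int \<Rightarrow> 'v \<Rightarrow> 'v) \<Rightarrow> nat
     \<Rightarrow> (nat \<Rightarrow> 'v) \<Rightarrow> (nat \<Rightarrow> 'v) \<Rightarrow> 'v \<Rightarrow> 'v \<Rightarrow> int \<Rightarrow> int \<Rightarrow> complex" where
  "F_coeff bf md d u ud a b i j = (\<Sum>\<alpha><d. bf a (md (ud \<alpha>) (-i-1) (md (u \<alpha>) (-j-1) b)))"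

text \<open>Coefficient of x^p y^(4-p) in G = P x^2y^2 + Q xy(x-y)^2 + R (x-y)^4.\<close>
definition G_coeff :: "complex \<Rightarrow> complex \<Rightarrow> complex \<Rightarrow> nat \<Rightarrow> complex" where
  "G_coeff P Q R p =
     (if p = 2 then P else 0)
     + (if 1 \<le> p \<and> p \<le> 3 then Q * of_nat (2 choose (p - 1)) * (-1) ^ (3 - p) else 0)
     + (if p \<le> 4 then R * of_nat (4 choose p) * (-1) ^ (4 - p) else 0)"

text \<open>Coefficient of x^i y^j in the expansion in |x|>|y| of
  (sum_{p\<le>4} g p x^p y^(4-p)) / (x^2 y^2 (x-y)^2),
using 1/(x-y)^2 = sum_{k\<ge>0} (k+1) x^(-k-2) y^k.\<close>
definition rat_expand :: "(nat \<Rightarrow> complex) \<Rightarrow> int \<Rightarrow> int \<Rightarrow> complex" where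
  "rat_expand g i j =
     (\<Sum>p\<le>4. let k = j - (2 - int p) in
        if k \<ge> 0 \<and> int p - 4 - k = i then g p * of_int (k + 1) else 0)"

end

(*
  Only the weight-zero coefficients of F survive, those of x^(-2-j) y^j, and they are all
  computed from the affine commutation relations of weight-one modes,
    [u_(m), v_(q)] = (u_(0) v)_(m+q) - m <u,v> delta(m+q,0),   u_(1) v = - <u,v> 1,
  together with skew symmetry u_(0) v = - v_(0) u and invariance of the form:
  j = -2 gives -<a,b>, j = -1 gives the trace of a_(0) b_(0), and for j >= 0 one gets
  -(j+1) d <a,b>, plus -<a,b> when j = 0, because the Casimir element
  sum_alpha u^alpha_(0) u_alpha vanishes by skew symmetry.  Comparing with the expansion of
  G / (x^2 y^2 (x-y)^2) in |x| > |y| determines P, Q and R.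

  The commutation relations are derived from locality: by Dong's lemma the commutator
  [a_(m), b_(q)] is local with every vertex operator, and so is
  sum_k binom(m,k) (a_(k) b)_(m+q-k); the two agree on the vacuum, where both are computed
  with the translation operator L(-1), hence everywhere.
*)

theory Submission
  imports Defs "HOL-Library.Function_Algebras"
begin

section \<open>Finite differences and mutual locality\<close>

lemma (in module) alternating_binomial_sum_Suc:
  "(\<Sum>i\<le>Suc N. scale ((-1)^i * of_nat (Suc N choose i)) (f i))
     = (\<Sum>i\<le>N. scale ((-1)^i * of_nat (N choose i)) (f i - f (Suc i)))"
proof -
  let ?c = "\<lambda>N i. (-1::'a)^i * of_nat (N choose i)"
  have pascal: "?c (Suc N) (Suc i) = ?c N (Suc i) - ?c N i" for i
    by (simp add: algebra_simps)
  have "(\<Sum>i\<le>Suc N. scale (?c (Suc N) i) (f i))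
      = f 0 + (\<Sum>i\<le>N. scale (?c (Suc N) (Suc i)) (f (Suc i)))"
    by (subst sum.atMost_Suc_shift) simp
  also have "\<dots> = (f 0 + (\<Sum>i\<le>N. scale (?c N (Suc i)) (f (Suc i))))
                  - (\<Sum>i\<le>N. scale (?c N i) (f (Suc i)))"
    by (simp only: pascal scale_left_diff_distrib sum_subtractf add_diff_eq)
  also have "f 0 + (\<Sum>i\<le>N. scale (?c N (Suc i)) (f (Suc i))) = (\<Sum>i\<le>Suc N. scale (?c N i) (f i))"
    by (subst sum.atMost_Suc_shift) simp
  also have "\<dots> = (\<Sum>i\<le>N. scale (?c N i) (f i))"
    by (simp add: binomial_eq_0)
  finally show ?thesis
    by (simp add: scale_right_diff_distrib sum_subtractf)
qed

text \<open>A family of operators A p, indexed by modes, stands for the series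
  A(x) = sum_p A p x^(-p-1).  On coefficient sequences g p q of series in x and y,
  delta is multiplication by x - y.\<close>

definition delta :: "(int \<Rightarrow> int \<Rightarrow> 'a::ab_group_add) \<Rightarrow> int \<Rightarrow> int \<Rightarrow> 'a" where
  "delta g p q = g (p + 1) q - g p (q + 1)"

lemma (in module) delta_pow_eq_sum:
  "(delta ^^ N) g p q = (\<Sum>i\<le>N. scale ((-1)^i * of_nat (N choose i)) (g (p + int N - int i) (q + int i)))"
proof (induction N arbitrary: g)
  case 0
  show ?case by simp
next
  case (Suc N)
  have "(delta ^^ Suc N) g p q = (delta ^^ N) (delta g) p q"
    by (simp only: funpow_Suc_right o_apply)
  also have "\<dots> = (\<Sum>i\<le>Suc N. scale ((-1)^i * of_nat (Suc N choose i))
                     (g (p + int (Suc N) - int i) (q + int i)))"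
    unfolding alternating_binomial_sum_Suc Suc.IH
    by (intro sum.cong) (simp_all add: delta_def algebra_simps)
  finally show ?case .
qed

lemma delta_pow_shift:
  "(delta ^^ N) (\<lambda>p q. g (p + s) (q + t)) = (\<lambda>p q. (delta ^^ N) g (p + s) (q + t))"
  by (induction N) (simp_all add: delta_def algebra_simps)

lemma delta_pow_additive:
  assumes "additive h"
  shows "(delta ^^ N) (\<lambda>p q. h (g p q)) = (\<lambda>p q. h ((delta ^^ N) g p q))"
  by (induction N) (simp_all add: delta_def additive.diff[OF assms])

lemma delta_pow_add:
  "(delta ^^ N) (\<lambda>p q. f p q + g p q) = (\<lambda>p q. (delta ^^ N) f p q + (delta ^^ N) g p q)"
  by (induction N) (simp_all add: delta_def algebra_simps)

lemma delta_pow_diff: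
  "(delta ^^ N) (\<lambda>p q. f p q - g p q) = (\<lambda>p q. (delta ^^ N) f p q - (delta ^^ N) g p q)"
  by (induction N) (simp_all add: delta_def algebra_simps)

lemma delta_pow_zero: "(delta ^^ N) (\<lambda>_ _. 0) = (\<lambda>_ _. 0)"
  by (induction N) (simp_all add: delta_def)

lemma delta_pow_vanishes_mono:
  assumes "(delta ^^ N) g = (\<lambda>_ _. 0)" and "N \<le> M"
  shows "(delta ^^ M) g = (\<lambda>_ _. 0)"
proof -
  obtain k where "M = k + N" using \<open>N \<le> M\<close> le_Suc_ex by (metis add.commute)
  then show ?thesis using assms(1) by (simp add: funpow_add delta_pow_zero)
qed

definition mutually_local :: "(int \<Rightarrow> 'a::ab_group_add \<Rightarrow> 'a) \<Rightarrow> (int \<Rightarrow> 'a \<Rightarrow> 'a) \<Rightarrow> bool" where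
  "mutually_local A B \<longleftrightarrow> (\<exists>N. \<forall>w. (delta ^^ N) (\<lambda>p q. A p (B q w) - B q (A p w)) = (\<lambda>_ _. 0))"

lemma mutually_localE:
  assumes "mutually_local A B"
  obtains N where "\<And>M w. N \<le> M \<Longrightarrow> (delta ^^ M) (\<lambda>p q. A p (B q w) - B q (A p w)) = (\<lambda>_ _. 0)"
proof -
  from assms obtain N where N: "\<And>w. (delta ^^ N) (\<lambda>p q. A p (B q w) - B q (A p w)) = (\<lambda>_ _. 0)"
    unfolding mutually_local_def by blast
  show thesis
    by (rule that, rule delta_pow_vanishes_mono[OF N])
qed

lemma mutually_local_shift:
  assumes "mutually_local A B"
  shows "mutually_local (\<lambda>p. A (p + s)) B"
proof -
  obtain N where N: "\<And>w. (delta ^^ N) (\<lambda>p q. A p (B q w) - B q (A p w)) = (\<lambda>_ _. 0)"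
    using assms by (rule mutually_localE) blast
  have "(delta ^^ N) (\<lambda>p q. A (p + s) (B q w) - B q (A (p + s) w)) = (\<lambda>_ _. 0)" for w
    using delta_pow_shift[of N "\<lambda>p q. A p (B q w) - B q (A p w)" s 0] by (simp add: N)
  then show ?thesis unfolding mutually_local_def by blast
qed

lemma mutually_local_add:
  assumes "mutually_local A C" "mutually_local B C" "\<And>q. additive (C q)"
  shows "mutually_local (\<lambda>p w. A p w + B p w) C"
proof -
  obtain N1 where N1: "\<And>M w. N1 \<le> M \<Longrightarrow> (delta ^^ M) (\<lambda>p q. A p (C q w) - C q (A p w)) = (\<lambda>_ _. 0)"
    using assms(1) by (rule mutually_localE) blast
  obtain N2 where N2: "\<And>M w. N2 \<le> M \<Longrightarrow> (delta ^^ M) (\<lambda>p q. B p (C q w) - C q (B p w)) = (\<lambda>_ _. 0)"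
    using assms(2) by (rule mutually_localE) blast
  have "(delta ^^ max N1 N2) (\<lambda>p q. A p (C q w) + B p (C q w) - C q (A p w + B p w)) = (\<lambda>_ _. 0)" for w
  proof -
    have "(\<lambda>p q. A p (C q w) + B p (C q w) - C q (A p w + B p w))
        = (\<lambda>p q. (A p (C q w) - C q (A p w)) + (B p (C q w) - C q (B p w)))"
      by (simp add: additive.add[OF assms(3)] fun_eq_iff)
    then show ?thesis by (simp add: delta_pow_add N1 N2)
  qed
  then show ?thesis unfolding mutually_local_def by blast
qed

lemma mutually_local_diff:
  assumes "mutually_local A C" "mutually_local B C" "\<And>q. additive (C q)"
  shows "mutually_local (\<lambda>p w. A p w - B p w) C"
proof -
  obtain N1 where N1: "\<And>M w. N1 \<le> M \<Longrightarrow> (delta ^^ M) (\<lambda>p q. A p (C q w) - C q (A p w)) = (\<lambda>_ _. 0)"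
    using assms(1) by (rule mutually_localE) blast
  obtain N2 where N2: "\<And>M w. N2 \<le> M \<Longrightarrow> (delta ^^ M) (\<lambda>p q. B p (C q w) - C q (B p w)) = (\<lambda>_ _. 0)"
    using assms(2) by (rule mutually_localE) blast
  have "(delta ^^ max N1 N2) (\<lambda>p q. A p (C q w) - B p (C q w) - C q (A p w - B p w)) = (\<lambda>_ _. 0)" for w
  proof -
    have "(\<lambda>p q. A p (C q w) - B p (C q w) - C q (A p w - B p w))
        = (\<lambda>p q. (A p (C q w) - C q (A p w)) - (B p (C q w) - C q (B p w)))"
      by (simp add: additive.diff[OF assms(3)] fun_eq_iff)
    then show ?thesis
      using delta_pow_diff[of "max N1 N2" "\<lambda>p q. A p (C q w) - C q (A p w)" "\<lambda>p q. B p (C q w) - C q (B p w)"]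
      by (simp add: N1 N2)
  qed
  then show ?thesis unfolding mutually_local_def by blast
qed

lemma mutually_local_sum:
  assumes "finite K" "\<And>k. k \<in> K \<Longrightarrow> mutually_local (A k) C" "\<And>q. additive (C q)"
  shows "mutually_local (\<lambda>p w. \<Sum>k\<in>K. A k p w) C"
  using assms(1,2)
proof (induction K rule: finite_induct)
  case empty
  show ?case
    unfolding mutually_local_def by (auto simp: additive.zero[OF assms(3)] delta_pow_zero)
next
  case (insert k K)
  then show ?case
    by (simp add: mutually_local_add assms(3))
qed

section \<open>Dong's lemma\<close>

lemma funpow_commute:
  assumes "\<And>x. f (g x) = g (f x)"
  shows "f ((g ^^ n) x) = (g ^^ n) (f x)"
  by (induction n) (simp_all add: assms)

lemma additive_funpow:
  fixes f :: "'a::ab_group_add \<Rightarrow> 'a"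
  assumes "additive f"
  shows "additive (f ^^ n)"
  by (induction n) (simp_all add: additive_def additive.add[OF assms])

text \<open>Read D1, D2, D3 = D1 + D2 as multiplication by
  x - y, y - z and x - z: a power of y - z is a combination of terms
  (x - y)^i (x - z)^j, each killed by one of the two hypotheses.\<close>

lemma dong_funpow:
  fixes D1 D2 D3 :: "'a::ab_group_add \<Rightarrow> 'a"
  assumes add1: "additive D1" and add2: "additive D2" and comm: "\<And>x. D1 (D2 x) = D2 (D1 x)"
    and D3: "\<And>x. D3 x = D1 x + D2 x"
  shows "(D1 ^^ A) y = 0 \<Longrightarrow> (D2 ^^ B) ((D3 ^^ C) y) = 0 \<Longrightarrow> (D2 ^^ (A + B + C)) y = 0"
proof (induction "A + C" arbitrary: A C y rule: less_induct)
  case less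
  have D2_pow_zero: "(D2 ^^ n) 0 = 0" for n
    using additive.zero[OF additive_funpow[OF add2]] .
  have comm13: "D1 (D3 x) = D3 (D1 x)" for x
    by (simp add: D3 additive.add[OF add1] comm)
  consider "A = 0" | "C = 0" | A' C' where "A = Suc A'" "C = Suc C'"
    by (metis not0_implies_Suc)
  then show ?case
  proof cases
    case 1
    then show ?thesis using less.prems(1) D2_pow_zero by simp
  next
    case 2
    then show ?thesis using less.prems(2) D2_pow_zero by (simp add: funpow_add)
  next
    case 3
    have "(D2 ^^ (A' + B + C)) (D1 y) = 0"
    proof (rule less.hyps)
      have "(D2 ^^ B) ((D3 ^^ C) (D1 y)) = D1 ((D2 ^^ B) ((D3 ^^ C) y))"
        by (simp add: funpow_commute[of D1 D3, OF comm13] funpow_commute[of D1 D2, OF comm])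
      then show "(D2 ^^ B) ((D3 ^^ C) (D1 y)) = 0"
        using less.prems(2) additive.zero[OF add1] by simp
    qed (use less.prems(1) 3 in \<open>simp_all add: funpow_swap1\<close>)
    moreover have "(D2 ^^ (A + B + C')) (D3 y) = 0"
    proof (rule less.hyps)
      have "(D1 ^^ A) (D3 y) = D3 ((D1 ^^ A) y)"
        by (simp add: funpow_commute[of D3 D1, OF comm13[symmetric]])
      then show "(D1 ^^ A) (D3 y) = 0"
        using less.prems(1) by (simp add: D3 additive.zero[OF add1] additive.zero[OF add2])
      have "(D3 ^^ C') (D3 y) = (D3 ^^ C) y"
        using 3 by (simp only: funpow_Suc_right o_apply)
      then show "(D2 ^^ B) ((D3 ^^ C') (D3 y)) = 0"
        using less.prems(2) by simp
    qed (use 3 in simp)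
    moreover have "(D2 ^^ (A + B + C)) y = (D2 ^^ (A' + B + C)) (D3 y - D1 y)"
      using 3 by (simp only: D3 funpow_Suc_right o_apply add_Suc add_Suc_right) simp
    ultimately show ?thesis
      using 3 by (simp add: additive.diff[OF additive_funpow[OF add2]] del: funpow.simps)
  qed
qed

definition delta_xy :: "(int \<Rightarrow> int \<Rightarrow> int \<Rightarrow> 'a::ab_group_add) \<Rightarrow> int \<Rightarrow> int \<Rightarrow> int \<Rightarrow> 'a" where
  "delta_xy F p q r = F (p + 1) q r - F p (q + 1) r"

definition delta_yz :: "(int \<Rightarrow> int \<Rightarrow> int \<Rightarrow> 'a::ab_group_add) \<Rightarrow> int \<Rightarrow> int \<Rightarrow> int \<Rightarrow> 'a" where
  "delta_yz F p q r = F p (q + 1) r - F p q (r + 1)"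

definition delta_xz :: "(int \<Rightarrow> int \<Rightarrow> int \<Rightarrow> 'a::ab_group_add) \<Rightarrow> int \<Rightarrow> int \<Rightarrow> int \<Rightarrow> 'a" where
  "delta_xz F p q r = F (p + 1) q r - F p q (r + 1)"

lemma additive_delta_xy: "additive delta_xy"
  by unfold_locales (simp add: delta_xy_def fun_eq_iff)

lemma additive_delta_yz: "additive delta_yz"
  by unfold_locales (simp add: delta_yz_def fun_eq_iff)

lemma additive_delta_xz: "additive delta_xz"
  by unfold_locales (simp add: delta_xz_def fun_eq_iff)

lemma delta_xy_delta_yz_commute: "delta_xy (delta_yz F) = delta_yz (delta_xy F)"
  by (simp add: delta_xy_def delta_yz_def fun_eq_iff)

lemma delta_xz_eq: "delta_xz F = delta_xy F + delta_yz F"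
  by (simp add: delta_xy_def delta_yz_def delta_xz_def fun_eq_iff)

lemma delta_yz_delta_xz_pow_commute: "(delta_yz ^^ m) ((delta_xz ^^ n) F) = (delta_xz ^^ n) ((delta_yz ^^ m) F)"
proof (rule funpow_commute)
  have "delta_xz (delta_yz F) = delta_yz (delta_xz F)" for F :: "int \<Rightarrow> int \<Rightarrow> int \<Rightarrow> 'a"
    by (simp add: delta_yz_def delta_xz_def fun_eq_iff)
  then show "(delta_yz ^^ m) (delta_xz F) = delta_xz ((delta_yz ^^ m) F)" for F :: "int \<Rightarrow> int \<Rightarrow> int \<Rightarrow> 'a"
    by (rule funpow_commute[of delta_xz delta_yz, symmetric])
qed

lemma delta_xy_pow: "(delta_xy ^^ n) F = (\<lambda>p q r. (delta ^^ n) (\<lambda>p q. F p q r) p q)"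
  by (induction n) (simp_all add: delta_xy_def delta_def)

lemma delta_yz_pow: "(delta_yz ^^ n) F = (\<lambda>p q r. (delta ^^ n) (\<lambda>q r. F p q r) q r)"
  by (induction n) (simp_all add: delta_yz_def delta_def)

lemma delta_xz_pow: "(delta_xz ^^ n) F = (\<lambda>p q r. (delta ^^ n) (\<lambda>p r. F p q r) p r)"
  by (induction n) (simp_all add: delta_xz_def delta_def)

lemma mutually_local_commutator:
  assumes add_A: "\<And>p. additive (A p)" and add_B: "\<And>q. additive (B q)"
    and add_C: "\<And>r. additive (C r)"
    and AB: "mutually_local A B" and BC: "mutually_local B C" and AC: "mutually_local A C"
  shows "mutually_local (\<lambda>q w. A p (B q w) - B q (A p w)) C"
proof -
  obtain NAB where NAB: "\<And>w. (delta ^^ NAB) (\<lambda>p q. A p (B q w) - B q (A p w)) = (\<lambda>_ _. 0)"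
    using AB by (rule mutually_localE) blast
  obtain NBC where NBC: "\<And>w. (delta ^^ NBC) (\<lambda>q r. B q (C r w) - C r (B q w)) = (\<lambda>_ _. 0)"
    using BC by (rule mutually_localE) blast
  obtain NAC where NAC: "\<And>w. (delta ^^ NAC) (\<lambda>p r. A p (C r w) - C r (A p w)) = (\<lambda>_ _. 0)"
    using AC by (rule mutually_localE) blast
  have "(delta ^^ (NAB + NBC + NAC))
      (\<lambda>q r. A p (B q (C r w)) - B q (A p (C r w)) - C r (A p (B q w) - B q (A p w))) = (\<lambda>_ _. 0)" for w
  proof -
    define X where "X p q r = A p (B q (C r w)) - B q (A p (C r w)) - C r (A p (B q w) - B q (A p w))"
      for p q r
    define J1 where "J1 p q r = A p (B q (C r w) - C r (B q w)) - (B q (C r (A p w)) - C r (B q (A p w)))"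
      for p q r
    define J2 where "J2 p q r = B q (A p (C r w) - C r (A p w)) - (A p (C r (B q w)) - C r (A p (B q w)))"
      for p q r
    have jacobi: "X = J1 - J2"
      by (simp add: X_def J1_def J2_def fun_eq_iff additive.diff[OF add_A] additive.diff[OF add_B]
          additive.diff[OF add_C])
    have "(delta_xy ^^ NAB) X = 0"
      using NAB[of "C _ w"] NAB[of w]
      by (simp add: X_def delta_xy_pow fun_eq_iff delta_pow_diff delta_pow_additive[OF add_C] additive.zero[OF add_C])
    moreover have "(delta_yz ^^ NBC) J1 = 0"
      using NBC[of w] NBC[of "A _ w"]
      by (simp add: J1_def delta_yz_pow fun_eq_iff delta_pow_diff delta_pow_additive[OF add_A] additive.zero[OF add_A])
    moreover have "(delta_xz ^^ NAC) J2 = 0"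
      using NAC[of w] NAC[of "B _ w"]
      by (simp add: J2_def delta_xz_pow fun_eq_iff delta_pow_diff delta_pow_additive[OF add_B] additive.zero[OF add_B])
    ultimately have "(delta_yz ^^ (NAB + NBC + NAC)) X = 0"
      by (intro dong_funpow[OF additive_delta_xy additive_delta_yz delta_xy_delta_yz_commute delta_xz_eq])
        (simp_all add: jacobi delta_yz_delta_xz_pow_commute additive.diff[OF additive_funpow[OF additive_delta_xz]]
          additive.zero[OF additive_funpow[OF additive_delta_yz]] additive.zero[OF additive_funpow[OF additive_delta_xz]])
    then show ?thesis
      by (simp add: delta_yz_pow fun_eq_iff X_def)
  qed
  then show ?thesis
    unfolding mutually_local_def by (auto simp: additive.diff[OF add_C])
qed

section \<open>Vertex operator algebras\<close>

locale voa =
  fixes sc :: "complex \<Rightarrow> 'v::ab_group_add \<Rightarrow> 'v"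
    and md :: "'v \<Rightarrow> int \<Rightarrow> 'v \<Rightarrow> 'v"
    and one om :: 'v and C :: complex
    and bf :: "'v \<Rightarrow> 'v \<Rightarrow> complex"
  assumes VOA: "is_VOA sc md one om C"
    and LZ: "is_LZ_metric sc md one om bf"
    and L1_weight_one: "\<forall>v \<in> wt_space sc (Vir md om 0) 1. Vir md om 1 v = 0"
begin

abbreviation W :: "int \<Rightarrow> 'v set" where
  "W k \<equiv> wt_space sc (Vir md om 0) k"

abbreviation L :: "int \<Rightarrow> 'v \<Rightarrow> 'v" where
  "L n \<equiv> Vir md om n"

lemma vector_space: "vector_space sc"
  using VOA by (simp add: is_VOA_def)

sublocale vs: vector_space sc
  by (fact vector_space)

lemma linear_mode: "Vector_Spaces.linear sc sc (md a n)"
  using VOA by (simp add: is_VOA_def)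

lemma linear_mode_left: "Vector_Spaces.linear sc sc (\<lambda>a. md a n b)"
  using VOA by (simp add: is_VOA_def)

lemma vacuum_mode: "md one n v = (if n = -1 then v else 0)"
  using VOA by (simp add: is_VOA_def)

lemma mode_create [simp]: "md a (-1) one = a"
  using VOA by (simp add: is_VOA_def)

lemma mode_vacuum: "0 \<le> n \<Longrightarrow> md a n one = 0"
  using VOA by (simp add: is_VOA_def)

lemma locality: "mutually_local (md a) (md b)"
proof -
  have "\<exists>N::nat. \<forall>m n c. (\<Sum>i\<le>N. sc ((-1)^i * of_nat (N choose i))
      (md a (m + int N - int i) (md b (n + int i) c) - md b (n + int i) (md a (m + int N - int i) c))) = 0"
    using VOA by (simp add: is_VOA_def)
  then obtain N :: nat where N: "\<forall>m n c. (\<Sum>i\<le>N. sc ((-1)^i * of_nat (N choose i))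
      (md a (m + int N - int i) (md b (n + int i) c) - md b (n + int i) (md a (m + int N - int i) c))) = 0"
    by blast
  have "(delta ^^ N) (\<lambda>p q. md a p (md b q w) - md b q (md a p w)) p q = 0" for w p q
    unfolding vs.delta_pow_eq_sum by (rule N[rule_format])
  then show ?thesis
    unfolding mutually_local_def by blast
qed

lemma conformal_weight: "om \<in> W 2"
  using VOA by (simp add: is_VOA_def)

lemma virasoro: "L m (L n v) - L n (L m v)
    = sc (of_int (m - n)) (L (m + n) v) + sc (if m + n = 0 then (of_int m ^ 3 - of_int m) / 12 * C else 0) v"
  using VOA by (simp add: is_VOA_def)

lemma translation_commutator: "L (-1) (md a n v) - md a n (L (-1) v) = sc (- of_int n) (md a (n - 1) v)"
  using VOA by (simp add: is_VOA_def)

lemma L0_commutator: "a \<in> W k \<Longrightarrow> L 0 (md a n v) - md a n (L 0 v) = sc (of_int (k - n - 1)) (md a n v)"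
  using VOA by (simp add: is_VOA_def)

lemma span_weight_spaces: "v \<in> vs.span (\<Union>k::nat. W (int k))"
  using VOA by (simp add: is_VOA_def)

lemma weight_zero_space: "W 0 = {sc c one | c. True}"
  using VOA by (simp add: is_VOA_def)

lemma bf_add_left: "bf (x + y) z = bf x z + bf y z"
  using LZ unfolding is_LZ_metric_def by metis

lemma bf_scale_left: "bf (sc c x) y = c * bf x y"
  using LZ unfolding is_LZ_metric_def by metis

lemma bf_commute: "bf x y = bf y x"
  using LZ by (simp add: is_LZ_metric_def)

lemma bf_vacuum: "bf one one = 1"
  using LZ by (simp add: is_LZ_metric_def)

lemma bf_invariant:
  "c \<in> W (int k) \<Longrightarrow> bf a (md c m b) = (-1) ^ k *
     (\<Sum>j\<le>k. bf (md ((L 1 ^^ j) c) (2 * int k - int j - m - 2) a) b / of_nat (fact j))"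
  using LZ by (simp add: is_LZ_metric_def)

lemma bf_nondegenerate: "(\<And>y. bf x y = 0) \<Longrightarrow> x = 0"
proof -
  have "\<forall>x. (\<forall>y. bf x y = 0) \<longrightarrow> x = 0"
    using LZ unfolding is_LZ_metric_def by (elim conjE) assumption
  then show "(\<And>y. bf x y = 0) \<Longrightarrow> x = 0" by blast
qed

lemma additive_mode: "additive (md a n)"
  using linear_mode[of a n] by (simp add: additive_def Vector_Spaces.linear_iff)

lemma additive_mode_left: "additive (\<lambda>a. md a n b)"
  using linear_mode_left[of n b] by (simp add: additive_def Vector_Spaces.linear_iff)

lemma mode_scale: "md a n (sc c x) = sc c (md a n x)"
  using linear_mode[of a n] by (simp add: Vector_Spaces.linear_iff)

lemma mode_scale_left: "md (sc c x) n b = sc c (md x n b)"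
  using linear_mode_left[of n b] by (simp add: Vector_Spaces.linear_iff)

lemmas mode_add = additive.add[OF additive_mode]
  and mode_zero [simp] = additive.zero[OF additive_mode]
  and mode_minus = additive.minus[OF additive_mode]
  and mode_sum = additive.sum[OF additive_mode]
  and mode_zero_left [simp] = additive.zero[OF additive_mode_left]
  and mode_minus_left = additive.minus[OF additive_mode_left]
  and mode_sum_left = additive.sum[OF additive_mode_left]

lemma additive_bf: "additive (bf x)"
  by unfold_locales (simp add: bf_commute[of x] bf_add_left)

lemma additive_bf_left: "additive (\<lambda>x. bf x y)"
  by unfold_locales (fact bf_add_left)

lemma bf_scale: "bf x (sc c y) = c * bf x y"
  by (simp add: bf_commute[of x] bf_scale_left)

lemmas bf_add = additive.add[OF additive_bf]
  and bf_zero [simp] = additive.zero[OF additive_bf]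
  and bf_diff = additive.diff[OF additive_bf]
  and bf_minus = additive.minus[OF additive_bf]
  and bf_sum = additive.sum[OF additive_bf]
  and bf_zero_left [simp] = additive.zero[OF additive_bf_left]
  and bf_minus_left = additive.minus[OF additive_bf_left]

lemma weight_mode:
  assumes "a \<in> W k" "v \<in> W l"
  shows "md a n v \<in> W (k - n - 1 + l)"
proof -
  have "L 0 (md a n v) = md a n (L 0 v) + sc (of_int (k - n - 1)) (md a n v)"
    using L0_commutator[OF assms(1), of n v] by (simp add: algebra_simps)
  also have "\<dots> = sc (of_int (k - n - 1 + l)) (md a n v)"
    using assms(2) by (simp add: wt_space_def mode_scale vs.scale_left_distrib add.commute)
  finally show ?thesis
    by (simp add: wt_space_def)
qed

lemma L1_conformal: "L 1 om = 0"
proof -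
  have "L 1 (L (-2) one) - L (-2) (L 1 one) = sc 3 (L (-1) one)"
    using virasoro[of 1 "-2" one] by simp
  then show ?thesis
    by (simp add: Vir_def mode_vacuum)
qed

lemma bf_invariant_quasi_primary:
  assumes "c \<in> W (int k)" "L 1 c = 0"
  shows "bf a (md c m b) = (-1) ^ k * bf (md c (2 * int k - m - 2) a) b"
proof -
  have "(L 1 ^^ Suc j) c = (L 1 ^^ j) (L 1 c)" for j
    by (simp only: funpow_Suc_right o_apply)
  then have "(L 1 ^^ Suc j) c = 0" for j
    using additive.zero[OF additive_funpow[OF additive_mode]] assms(2) by (simp add: Vir_def)
  then show ?thesis
    unfolding bf_invariant[OF assms(1)] by (simp add: sum.atMost_shift)
qed

lemma bf_L0_symmetric: "bf x (L 0 y) = bf (L 0 x) y"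
  using bf_invariant_quasi_primary[of om 2 x 1 y] conformal_weight L1_conformal
  by (simp add: Vir_def)

lemma bf_weight_orthogonal:
  assumes "x \<in> W k" "y \<in> W l" "k \<noteq> l"
  shows "bf x y = 0"
proof -
  have "of_int l * bf x y = of_int k * bf x y"
    using bf_L0_symmetric[of x y] assms(1,2) by (simp add: wt_space_def bf_scale bf_scale_left)
  with assms(3) show ?thesis
    by simp
qed

lemma negative_weight_zero:
  assumes "v \<in> W k" "k < 0"
  shows "v = 0"
proof (rule bf_nondegenerate)
  fix y
  have "y \<in> vs.span (\<Union>k::nat. W (int k))"
    by (rule span_weight_spaces)
  then show "bf v y = 0"
  proof (induction rule: vs.span_induct_alt)
    case (step c x y)
    then obtain n :: nat where "x \<in> W (int n)" by blast
    with assms have "bf v x = 0"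
      by (intro bf_weight_orthogonal) auto
    with step show ?case
      by (simp add: bf_add bf_scale)
  qed simp
qed

lemma bf_invariant_weight_one:
  "c \<in> W 1 \<Longrightarrow> bf x (md c m y) = - bf (md c (- m) x) y"
  using bf_invariant_quasi_primary[of c 1 x m y] L1_weight_one by simp

lemma mode_weight_one_vanishes:
  assumes "u \<in> W 1" "v \<in> W 1" "2 \<le> n"
  shows "md u n v = 0"
  using weight_mode[OF assms(1,2), of n] assms(3) by (auto intro: negative_weight_zero)

lemma mode_weight_one_one:
  assumes "u \<in> W 1" "v \<in> W 1"
  shows "md u 1 v = sc (- bf u v) one"
proof -
  have "md u 1 v \<in> W 0"
    using weight_mode[OF assms, of 1] by simp
  then obtain c where c: "md u 1 v = sc c one"
    using weight_zero_space by auto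
  have "bf one (md u 1 v) = - bf u v"
    using bf_invariant_weight_one[OF assms(1), of one 1 v] by simp
  then have "c = - bf u v"
    by (simp add: c bf_scale bf_vacuum)
  with c show ?thesis
    by simp
qed

section \<open>The commutator formula\<close>

lemma Vir_scale: "L n (sc c x) = sc c (L n x)"
  by (simp add: Vir_def mode_scale)

lemma Vir_sum: "L n (sum f A) = (\<Sum>x\<in>A. L n (f x))"
  by (simp add: Vir_def mode_sum)

lemma translation_vacuum [simp]: "L (-1) one = 0"
  by (simp add: Vir_def mode_vacuum)

lemma translation_create: "L (-1) (md x n one) = sc (- of_int n) (md x (n - 1) one)"
  using translation_commutator[of x n one] by simp

definition commutator_sum :: "'v \<Rightarrow> 'v \<Rightarrow> nat \<Rightarrow> int \<Rightarrow> 'v \<Rightarrow> 'v" where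
  "commutator_sum a b m q w = (\<Sum>k\<le>m. sc (of_nat (m choose k)) (md (md a (int k) b) (int m + q - int k) w))"

lemma commutator_sum_translation:
  "L (-1) (commutator_sum a b m q one) + sc (of_nat m) (commutator_sum a b (m - 1) q one)
     = sc (- of_int q) (commutator_sum a b m (q - 1) one)"
proof -
  let ?t = "\<lambda>k n. md (md a (int k) b) n one"
  have "L (-1) (commutator_sum a b m q one)
      = (\<Sum>k\<le>m. sc (of_nat (m choose k) * - of_int (int m + q - int k)) (?t k (int m + q - int k - 1)))"
    by (simp add: commutator_sum_def Vir_sum Vir_scale translation_create)
  moreover have "sc (of_nat m) (commutator_sum a b (m - 1) q one)
      = (\<Sum>k\<le>m. sc ((of_nat m - of_nat k) * of_nat (m choose k)) (?t k (int m + q - int k - 1)))"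
  proof (cases m)
    case (Suc m')
    have "sc (of_nat m) (commutator_sum a b (m - 1) q one)
        = (\<Sum>k\<le>m'. sc (of_nat (m * (m' choose k))) (?t k (int m + q - int k - 1)))"
      using Suc by (simp add: commutator_sum_def vs.scale_sum_right algebra_simps)
    also have "\<dots> = (\<Sum>k\<le>m. sc (of_nat ((m - k) * (m choose k))) (?t k (int m + q - int k - 1)))"
      using Suc by (simp add: binomial_absorb_comp binomial_eq_0)
    finally show ?thesis
      by simp
  qed simp
  moreover have "sc (of_nat (m choose k) * - of_int (int m + q - int k)) (?t k (int m + q - int k - 1))
      + sc ((of_nat m - of_nat k) * of_nat (m choose k)) (?t k (int m + q - int k - 1))
      = sc (- of_int q) (sc (of_nat (m choose k)) (?t k (int m + (q - 1) - int k)))" for k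
  proof -
    have "of_nat (m choose k) * - of_int (int m + q - int k) + (of_nat m - of_nat k) * of_nat (m choose k)
        = - of_int q * (of_nat (m choose k) :: complex)"
      by (simp add: algebra_simps)
    moreover have "int m + q - int k - 1 = int m + (q - 1) - int k"
      by simp
    ultimately show ?thesis
      by (simp only: vs.scale_left_distrib[symmetric] vs.scale_scale)
  qed
  ultimately show ?thesis
    by (simp add: commutator_sum_def vs.scale_sum_right sum.distrib[symmetric])
qed

lemma commutator_formula_vacuum_create: "md a (int m) (md b (-1) one) = commutator_sum a b m (-1) one"
proof -
  have "commutator_sum a b m (-1) one
      = (\<Sum>k<m. sc (of_nat (m choose k)) (md (md a (int k) b) (int m - 1 - int k) one)) + md a (int m) b"
    by (simp add: commutator_sum_def lessThan_Suc_atMost[symmetric])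
  then show ?thesis
    by (simp add: mode_vacuum)
qed

lemma commutator_formula_vacuum_translate:
  assumes IH: "\<And>m. md a (int m) (md b q one) = commutator_sum a b m q one" and "q \<noteq> 0"
  shows "md a (int m) (md b (q - 1) one) = commutator_sum a b m (q - 1) one"
proof -
  have "sc (- of_int q) (md a (int m) (md b (q - 1) one)) = md a (int m) (L (-1) (md b q one))"
    by (simp add: translation_create mode_scale mode_minus)
  also have "\<dots> = L (-1) (md a (int m) (md b q one)) + sc (of_nat m) (md a (int m - 1) (md b q one))"
    using translation_commutator[of a "int m" "md b q one"] by (simp add: algebra_simps)
  also have "\<dots> = L (-1) (commutator_sum a b m q one) + sc (of_nat m) (commutator_sum a b (m - 1) q one)"
  proof -
    have "m \<noteq> 0 \<Longrightarrow> md a (int m - 1) (md b q one) = commutator_sum a b (m - 1) q one"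
      using IH[of "m - 1"] by simp
    then show ?thesis
      using IH[of m] by (cases "m = 0") simp_all
  qed
  also have "\<dots> = sc (- of_int q) (commutator_sum a b m (q - 1) one)"
    by (rule commutator_sum_translation)
  finally show ?thesis
    using \<open>q \<noteq> 0\<close> by simp
qed

lemma commutator_formula_vacuum: "md a (int m) (md b q one) = commutator_sum a b m q one"
proof (cases "0 \<le> q")
  case True
  then show ?thesis
    by (simp add: commutator_sum_def mode_vacuum)
next
  case False
  have "md a (int m) (md b (-1 - int r) one) = commutator_sum a b m (-1 - int r) one" for r m
  proof (induction r arbitrary: m)
    case 0
    show ?case
      using commutator_formula_vacuum_create by simp
  next
    case (Suc r)
    then show ?case
      using commutator_formula_vacuum_translate[of a b "-1 - int r"] by (simp add: algebra_simps)
  qed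
  from this[where r = "nat (-1 - q)"] False show ?thesis
    by simp
qed

text \<open>Goddard's uniqueness argument: in the locality relation for D and Y(c, z), applied to
  the vacuum at the right coefficient, only the term D q (c_(-1) 1) = D q c survives.\<close>

lemma vacuum_uniqueness:
  assumes "mutually_local D (md c)" "\<And>q. D q one = 0" "\<And>q. D q 0 = 0"
  shows "D q c = 0"
proof -
  obtain N where N: "(delta ^^ N) (\<lambda>p n. D p (md c n one) - md c n (D p one)) = (\<lambda>_ _. 0)"
    using assms(1) by (rule mutually_localE) blast
  have "0 = (delta ^^ N) (\<lambda>p n. D p (md c n one) - md c n (D p one)) (q - int N) (-1)"
    by (simp add: N)
  also have "\<dots> = D q c"
    by (simp add: vs.delta_pow_eq_sum sum.atMost_shift assms(2,3) mode_vacuum)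
  finally show ?thesis
    by simp
qed

lemma mutually_local_commutator_sum: "mutually_local (commutator_sum a b m) (md c)"
proof -
  have "commutator_sum a b m
      = (\<lambda>q w. \<Sum>k\<le>m. md (sc (of_nat (m choose k)) (md a (int k) b)) (q + (int m - int k)) w)"
    by (simp add: commutator_sum_def fun_eq_iff mode_scale_left algebra_simps)
  then show ?thesis
    by (simp only:) (intro mutually_local_sum mutually_local_shift locality additive_mode; simp)
qed

text \<open>Both sides are mutually local with Y(w, z), the left one by Dong's lemma, and they
  agree on the vacuum.\<close>

theorem commutator_formula:
  "md a (int m) (md b q w) - md b q (md a (int m) w) = commutator_sum a b m q w"
proof -
  define D where "D q w = md a (int m) (md b q w) - md b q (md a (int m) w) - commutator_sum a b m q w"
    for q w
  have "mutually_local D (md w)"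
    unfolding D_def
    by (intro mutually_local_diff mutually_local_commutator mutually_local_commutator_sum locality
        additive_mode)
  moreover have "D q one = 0" for q
    by (simp add: D_def commutator_formula_vacuum mode_vacuum)
  moreover have "D q 0 = 0" for q
    by (simp add: D_def commutator_sum_def)
  ultimately have "D q w = 0"
    by (rule vacuum_uniqueness)
  then show ?thesis
    by (simp add: D_def)
qed

lemma mode_weight_one_create:
  assumes "u \<in> W 1" "v \<in> W 1"
  shows "md v (int j) (md u (-1 - int j) one) = md v 0 u"
proof -
  have "md (md v (int (Suc k)) u) (- 2 - int k) one = 0" for k
  proof (cases k)
    case 0
    then show ?thesis
      by (simp add: mode_weight_one_one[OF assms(2,1)] mode_scale_left mode_minus_left vacuum_mode)
  qed (simp add: mode_weight_one_vanishes[OF assms(2,1)])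
  then show ?thesis
    using commutator_formula_vacuum[of v j u "-1 - int j"] by (simp add: commutator_sum_def sum.atMost_shift)
qed

text \<open>Locality of u and v applied to the vacuum: the terms v_(i-1) u_(-i) 1 with i > 0 all
  equal v_(0) u, and the alternating binomial sum leaves u_(0) v + v_(0) u.\<close>

lemma skew_symmetry_weight_one:
  assumes "u \<in> W 1" "v \<in> W 1"
  shows "md u 0 v = - md v 0 u"
proof -
  obtain N where N0: "\<And>M w. N \<le> M \<Longrightarrow> (delta ^^ M) (\<lambda>p q. md u p (md v q w) - md v q (md u p w)) = (\<lambda>_ _. 0)"
    using locality[of u v] by (rule mutually_localE) blast
  have N: "(delta ^^ Suc N) (\<lambda>p q. md u p (md v q one) - md v q (md u p one)) = (\<lambda>_ _. 0)"
    by (rule N0) simp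
  let ?g = "\<lambda>i::nat. md u (- int i) (md v (-1 + int i) one) - md v (-1 + int i) (md u (- int i) one)"
  let ?c = "\<lambda>i. (-1::complex) ^ i * of_nat (Suc N choose i)"
  have g_Suc: "?g (Suc i) = - md v 0 u" for i
    using mode_weight_one_create[OF assms, of i] by (simp add: mode_vacuum algebra_simps)
  have alternating: "(\<Sum>i\<le>N. ?c (Suc i)) = -1"
  proof -
    have "(\<Sum>i\<le>Suc N. ?c i) = 0"
      by (rule choose_alternating_sum) simp
    moreover have "(\<Sum>i\<le>Suc N. ?c i) = 1 + (\<Sum>i\<le>N. ?c (Suc i))"
      by (subst sum.atMost_Suc_shift) simp
    ultimately show ?thesis
      by (metis add_eq_0_iff)
  qed
  have "0 = (delta ^^ Suc N) (\<lambda>p q. md u p (md v q one) - md v q (md u p one)) (- int (Suc N)) (-1)"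
    by (simp only: N)
  also have "\<dots> = (\<Sum>i\<le>Suc N. sc (?c i) (?g i))"
    unfolding vs.delta_pow_eq_sum by simp
  also have "\<dots> = md u 0 v + sc (\<Sum>i\<le>N. ?c (Suc i)) (- md v 0 u)"
    unfolding sum.atMost_Suc_shift[of "\<lambda>i. sc (?c i) (?g i)"] g_Suc vs.scale_sum_left
    by (simp add: mode_vacuum)
  also have "\<dots> = md u 0 v + md v 0 u"
    unfolding alternating by simp
  finally show ?thesis
    by (simp add: eq_neg_iff_add_eq_0)
qed

lemma commutator_weight_one:
  assumes "u \<in> W 1" "v \<in> W 1"
  shows "md u (int m) (md v q w) = md v q (md u (int m) w) + md (md u 0 v) (int m + q) w
           - (if int m + q = 0 then sc (of_nat m * bf u v) w else 0)"
proof -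
  let ?f = "\<lambda>k. sc (of_nat (m choose k)) (md (md u (int k) v) (int m + q - int k) w)"
  have "md u (int m) (md v q w) - md v q (md u (int m) w) = (\<Sum>k\<le>m. ?f k)"
    unfolding commutator_formula commutator_sum_def ..
  also have "\<dots> = md (md u 0 v) (int m + q) w - (if int m + q = 0 then sc (of_nat m * bf u v) w else 0)"
  proof (cases m)
    case (Suc m')
    have vanishing: "?f (Suc (Suc k)) = 0" for k
      using mode_weight_one_vanishes[OF assms, of "int (Suc (Suc k))"] by simp
    have "(\<Sum>k\<le>m. ?f k) = ?f 0 + (\<Sum>k\<le>m'. ?f (Suc k))"
      unfolding Suc by (rule sum.atMost_Suc_shift)
    also have "\<dots> = ?f 0 + ?f (Suc 0)"
      unfolding sum.atMost_shift[of "\<lambda>k. ?f (Suc k)"] vanishing by simp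
    also have "?f (Suc 0) = - (if int m + q = 0 then sc (of_nat m * bf u v) w else 0)"
      by (simp add: mode_weight_one_one[OF assms] mode_scale_left mode_minus_left vacuum_mode)
    finally show ?thesis
      by simp
  qed simp
  finally show ?thesis
    by (simp add: algebra_simps)
qed

lemma mode_product_weight_one:
  assumes "x \<in> W 1" "y \<in> W 1" "b \<in> W 1" "1 \<le> m"
  shows "md x (int m) (md y (- int m) b)
    = (if m = 1 then sc (- bf x b) y else 0) + md (md x 0 y) 0 b - sc (of_nat m * bf x y) b"
proof -
  have "md y (- int m) (md x (int m) b) = (if m = 1 then sc (- bf x b) y else 0)"
  proof (cases "m = 1")
    case True
    then show ?thesis
      by (simp add: mode_weight_one_one[OF assms(1,3)] mode_scale mode_minus)
  next
    case False
    with assms(4) show ?thesis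
      by (simp add: mode_weight_one_vanishes[OF assms(1,3)])
  qed
  then show ?thesis
    using commutator_weight_one[OF assms(1,2), of m "- int m" b] by simp
qed

end

section \<open>The two-point function of V^(1)\<close>

locale voa_basis = voa sc md one om C bf
  for sc :: "complex \<Rightarrow> 'v::ab_group_add \<Rightarrow> 'v" and md one om C bf +
  fixes d :: nat and u ud :: "nat \<Rightarrow> 'v"
  assumes u_inj: "inj_on u {..<d}"
    and u_indep: "\<not> module.dependent sc (u ` {..<d})"
    and u_span: "module.span sc (u ` {..<d}) = wt_space sc (Vir md om 0) 1"
    and ud_in: "\<forall>i<d. ud i \<in> wt_space sc (Vir md om 0) 1"
    and dual: "\<forall>i<d. \<forall>j<d. bf (ud i) (u j) = (if i = j then 1 else 0)"
begin

lemma basis_weight_one: "\<alpha> < d \<Longrightarrow> u \<alpha> \<in> W 1"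
  using u_span vs.span_base[of "u \<alpha>" "u ` {..<d}"] by auto

lemma dual_basis_weight_one: "\<alpha> < d \<Longrightarrow> ud \<alpha> \<in> W 1"
  using ud_in by blast

lemma dual_pairing: "\<alpha> < d \<Longrightarrow> \<beta> < d \<Longrightarrow> bf (ud \<alpha>) (u \<beta>) = (if \<alpha> = \<beta> then 1 else 0)"
  using dual by blast

lemma dual_basis_expansion:
  assumes "x \<in> W 1"
  shows "x = (\<Sum>\<alpha><d. sc (bf (ud \<alpha>) x) (u \<alpha>))"
proof -
  obtain f where f: "x = (\<Sum>v\<in>u ` {..<d}. sc (f v) v)"
    using assms u_span vs.span_finite[of "u ` {..<d}"] by auto
  then have x_eq: "x = (\<Sum>\<alpha><d. sc (f (u \<alpha>)) (u \<alpha>))"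
    by (simp add: sum.reindex[OF u_inj])
  have "bf (ud \<beta>) x = f (u \<beta>)" if "\<beta> < d" for \<beta>
  proof -
    have "bf (ud \<beta>) x = (\<Sum>\<alpha><d. f (u \<alpha>) * bf (ud \<beta>) (u \<alpha>))"
      by (subst x_eq) (simp add: bf_sum bf_scale)
    also have "\<dots> = (\<Sum>\<alpha><d. if \<beta> = \<alpha> then f (u \<alpha>) else 0)"
      using that by (intro sum.cong) (simp_all add: dual_pairing)
    also have "\<dots> = f (u \<beta>)"
      using that by simp
    finally show ?thesis .
  qed
  then have "(\<Sum>\<alpha><d. sc (bf (ud \<alpha>) x) (u \<alpha>)) = (\<Sum>\<alpha><d. sc (f (u \<alpha>)) (u \<alpha>))"
    by simp
  with x_eq show ?thesis
    by simp
qed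

lemma casimir_symmetric:
  fixes \<beta> :: "'v \<Rightarrow> 'v \<Rightarrow> 'w::ab_group_add" and scw :: "complex \<Rightarrow> 'w \<Rightarrow> 'w"
  assumes add1: "\<And>z. additive (\<lambda>x. \<beta> x z)" and add2: "\<And>z. additive (\<beta> z)"
    and scale1: "\<And>c x z. \<beta> (sc c x) z = scw c (\<beta> x z)"
    and scale2: "\<And>c x z. \<beta> z (sc c x) = scw c (\<beta> z x)"
  shows "(\<Sum>\<alpha><d. \<beta> (ud \<alpha>) (u \<alpha>)) = (\<Sum>\<alpha><d. \<beta> (u \<alpha>) (ud \<alpha>))"
proof -
  have expand1: "\<beta> (ud \<alpha>) z = (\<Sum>\<gamma><d. scw (bf (ud \<gamma>) (ud \<alpha>)) (\<beta> (u \<gamma>) z))"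
    if "\<alpha> < d" for \<alpha> z
  proof -
    have "\<beta> (ud \<alpha>) z = \<beta> (\<Sum>\<gamma><d. sc (bf (ud \<gamma>) (ud \<alpha>)) (u \<gamma>)) z"
      using dual_basis_expansion[OF dual_basis_weight_one[OF that]] by (rule arg_cong)
    then show ?thesis
      by (simp only: additive.sum[OF add1] scale1)
  qed
  have expand2: "\<beta> z (ud \<alpha>) = (\<Sum>\<gamma><d. scw (bf (ud \<gamma>) (ud \<alpha>)) (\<beta> z (u \<gamma>)))"
    if "\<alpha> < d" for \<alpha> z
  proof -
    have "\<beta> z (ud \<alpha>) = \<beta> z (\<Sum>\<gamma><d. sc (bf (ud \<gamma>) (ud \<alpha>)) (u \<gamma>))"
      using dual_basis_expansion[OF dual_basis_weight_one[OF that]] by (rule arg_cong)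
    then show ?thesis
      by (simp only: additive.sum[OF add2] scale2)
  qed
  have "(\<Sum>\<alpha><d. \<beta> (ud \<alpha>) (u \<alpha>)) = (\<Sum>\<alpha><d. \<Sum>\<gamma><d. scw (bf (ud \<gamma>) (ud \<alpha>)) (\<beta> (u \<gamma>) (u \<alpha>)))"
    by (intro sum.cong refl) (simp add: expand1)
  also have "\<dots> = (\<Sum>\<gamma><d. \<Sum>\<alpha><d. scw (bf (ud \<alpha>) (ud \<gamma>)) (\<beta> (u \<gamma>) (u \<alpha>)))"
    by (subst sum.swap) (simp only: bf_commute)
  also have "\<dots> = (\<Sum>\<gamma><d. \<beta> (u \<gamma>) (ud \<gamma>))"
    by (intro sum.cong refl) (simp add: expand2)
  finally show ?thesis .
qed

lemma casimir_mode_zero: "(\<Sum>\<alpha><d. md (ud \<alpha>) 0 (u \<alpha>)) = 0"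
proof -
  let ?S = "\<Sum>\<alpha><d. md (ud \<alpha>) 0 (u \<alpha>)"
  have "?S = (\<Sum>\<alpha><d. md (u \<alpha>) 0 (ud \<alpha>))"
    by (rule casimir_symmetric[where \<beta> = "\<lambda>x y. md x 0 y" and scw = sc])
      (simp_all add: additive_mode additive_mode_left mode_scale mode_scale_left)
  also have "\<dots> = (\<Sum>\<alpha><d. - md (ud \<alpha>) 0 (u \<alpha>))"
    by (intro sum.cong refl) (simp add: skew_symmetry_weight_one[OF basis_weight_one dual_basis_weight_one])
  also have "\<dots> = - ?S"
    by (rule sum_negf)
  finally have "?S + ?S = 0"
    by (simp only: eq_neg_iff_add_eq_0)
  moreover have "sc 2 ?S = ?S + ?S"
    using vs.scale_left_distrib[of 1 1 ?S] by simp
  ultimately show ?thesis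
    by simp
qed

lemma bf_dual_sum:
  assumes "b \<in> W 1"
  shows "(\<Sum>\<alpha><d. bf (ud \<alpha>) b * bf a (u \<alpha>)) = bf a b"
proof -
  have "bf a b = bf a (\<Sum>\<alpha><d. sc (bf (ud \<alpha>) b) (u \<alpha>))"
    using dual_basis_expansion[OF assms] by (rule arg_cong)
  then show ?thesis
    by (simp add: bf_sum bf_scale)
qed

lemma bf_dual_sum':
  assumes "b \<in> W 1"
  shows "(\<Sum>\<alpha><d. bf (u \<alpha>) b * bf a (ud \<alpha>)) = bf a b"
proof -
  have "(\<Sum>\<alpha><d. bf (ud \<alpha>) b * bf a (u \<alpha>)) = (\<Sum>\<alpha><d. bf (u \<alpha>) b * bf a (ud \<alpha>))"
    by (rule casimir_symmetric[where \<beta> = "\<lambda>x y. bf x b * bf a y" and scw = "(*)"])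
      (simp_all add: additive_def bf_add bf_add_left bf_scale bf_scale_left algebra_simps)
  with bf_dual_sum[OF assms] show ?thesis
    by simp
qed

lemma trace_on_weight_one:
  assumes add: "additive f" and scale: "\<And>c x. f (sc c x) = sc c (f x)"
    and maps: "\<And>x. x \<in> W 1 \<Longrightarrow> f x \<in> W 1"
  shows "trace_on sc (W 1) f = (\<Sum>\<alpha><d. bf (ud \<alpha>) (f (u \<alpha>)))"
proof -
  let ?is_basis = "\<lambda>B. finite B \<and> \<not> vs.dependent B \<and> vs.span B = W 1"
  define B where "B = (SOME B. ?is_basis B)"
  have "?is_basis (u ` {..<d})"
    using u_indep u_span by simp
  then have "?is_basis B"
    unfolding B_def by (rule someI)
  then have fin: "finite B" and indep: "\<not> vs.dependent B" and span: "vs.span B = W 1"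
    by simp_all
  have u_span_B: "\<alpha> < d \<Longrightarrow> u \<alpha> \<in> vs.span B" for \<alpha>
    using span basis_weight_one by simp
  have rep: "vs.representation B (f x) x = (\<Sum>\<alpha><d. bf (ud \<alpha>) (f x) * vs.representation B (u \<alpha>) x)"
    if "x \<in> B" for x
  proof -
    have "f x \<in> W 1"
      using that span vs.span_base maps by blast
    then have "vs.representation B (f x) = vs.representation B (\<Sum>\<alpha><d. sc (bf (ud \<alpha>) (f x)) (u \<alpha>))"
      using dual_basis_expansion by metis
    also have "\<dots> = (\<lambda>b. \<Sum>\<alpha><d. vs.representation B (sc (bf (ud \<alpha>) (f x)) (u \<alpha>)) b)"
      by (rule vs.representation_sum[OF indep]) (simp add: vs.span_scale u_span_B)
    also have "\<dots> = (\<lambda>b. \<Sum>\<alpha><d. bf (ud \<alpha>) (f x) * vs.representation B (u \<alpha>) b)"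
      by (simp add: vs.representation_scale[OF indep] u_span_B)
    finally show ?thesis
      by simp
  qed
  have "trace_on sc (W 1) f = (\<Sum>x\<in>B. \<Sum>\<alpha><d. bf (ud \<alpha>) (f x) * vs.representation B (u \<alpha>) x)"
    unfolding trace_on_def B_def[symmetric] Let_def by (simp add: rep)
  also have "\<dots> = (\<Sum>\<alpha><d. bf (ud \<alpha>) (f (\<Sum>x\<in>B. sc (vs.representation B (u \<alpha>) x) x)))"
    by (subst sum.swap) (simp add: additive.sum[OF add] scale bf_sum bf_scale mult.commute)
  also have "\<dots> = (\<Sum>\<alpha><d. bf (ud \<alpha>) (f (u \<alpha>)))"
    by (intro sum.cong refl) (simp add: vs.sum_representation_eq[OF indep u_span_B fin])
  finally show ?thesis .
qed

lemma killing_eq_casimir: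
  assumes a: "a \<in> W 1" and b: "b \<in> W 1"
  shows "killing sc md om a b = (\<Sum>\<alpha><d. bf a (md (ud \<alpha>) 0 (md (u \<alpha>) 0 b)))"
proof -
  have maps: "md a 0 (md b 0 x) \<in> W 1" if "x \<in> W 1" for x
    using weight_mode[OF a weight_mode[OF b that, of 0], of 0] by simp
  have "killing sc md om a b = (\<Sum>\<alpha><d. bf (ud \<alpha>) (md a 0 (md b 0 (u \<alpha>))))"
    unfolding killing_def
    by (rule trace_on_weight_one) (simp_all add: additive_def mode_add mode_scale maps)
  also have "\<dots> = (\<Sum>\<alpha><d. bf a (md (ud \<alpha>) 0 (md (u \<alpha>) 0 b)))"
  proof (rule sum.cong)
    fix \<alpha> assume "\<alpha> \<in> {..<d}"
    then have u: "u \<alpha> \<in> W 1" and ud: "ud \<alpha> \<in> W 1"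
      by (simp_all add: basis_weight_one dual_basis_weight_one)
    have "bf (ud \<alpha>) (md a 0 (md b 0 (u \<alpha>))) = - bf (md a 0 (ud \<alpha>)) (md b 0 (u \<alpha>))"
      using bf_invariant_weight_one[OF a] by simp
    also have "\<dots> = - bf (md (ud \<alpha>) 0 a) (md (u \<alpha>) 0 b)"
      by (simp add: skew_symmetry_weight_one[OF a ud] skew_symmetry_weight_one[OF b u] bf_minus bf_minus_left)
    also have "\<dots> = bf a (md (ud \<alpha>) 0 (md (u \<alpha>) 0 b))"
      using bf_invariant_weight_one[OF ud] by simp
    finally show "bf (ud \<alpha>) (md a 0 (md b 0 (u \<alpha>))) = bf a (md (ud \<alpha>) 0 (md (u \<alpha>) 0 b))" .
  qed simp
  finally show ?thesis .
qed

lemma F_coeff_off_diagonal: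
  assumes "a \<in> W 1" "b \<in> W 1" "i + j \<noteq> -2"
  shows "F_coeff bf md d u ud a b i j = 0"
proof -
  have "bf a (md (ud \<alpha>) (-i-1) (md (u \<alpha>) (-j-1) b)) = 0" if "\<alpha> < d" for \<alpha>
  proof (rule bf_weight_orthogonal[OF assms(1)])
    show "md (ud \<alpha>) (-i-1) (md (u \<alpha>) (-j-1) b) \<in> W (1 - (-i-1) - 1 + (1 - (-j-1) - 1 + 1))"
      by (intro weight_mode basis_weight_one dual_basis_weight_one that assms(2))
    show "1 \<noteq> 1 - (-i-1) - 1 + (1 - (-j-1) - 1 + 1)"
      using assms(3) by simp
  qed
  then show ?thesis
    by (simp add: F_coeff_def)
qed

lemma F_coeff_below:
  assumes "b \<in> W 1" "j < -2"
  shows "F_coeff bf md d u ud a b i j = 0"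
  using assms by (simp add: F_coeff_def mode_weight_one_vanishes basis_weight_one)

lemma F_coeff_minus_two:
  assumes "b \<in> W 1"
  shows "F_coeff bf md d u ud a b 0 (-2) = - bf a b"
proof -
  have "F_coeff bf md d u ud a b 0 (-2) = - (\<Sum>\<alpha><d. bf (u \<alpha>) b * bf a (ud \<alpha>))"
    by (simp add: F_coeff_def mode_weight_one_one[OF basis_weight_one assms] mode_scale mode_minus bf_minus
        bf_scale sum_negf)
  then show ?thesis
    by (simp add: bf_dual_sum'[OF assms])
qed

lemma F_coeff_minus_one:
  assumes "a \<in> W 1" "b \<in> W 1"
  shows "F_coeff bf md d u ud a b (-1) (-1) = killing sc md om a b"
  by (simp add: F_coeff_def killing_eq_casimir[OF assms])

lemma F_coeff_nonnegative:
  assumes "b \<in> W 1" "0 \<le> j"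
  shows "F_coeff bf md d u ud a b (-2 - j) j
    = - (of_int (j + 1) * of_nat d * bf a b) - (if j = 0 then bf a b else 0)"
proof -
  define m where "m = nat (j + 1)"
  have m: "int m = j + 1" "1 \<le> m"
    using assms(2) by (simp_all add: m_def)
  have summand: "bf a (md (ud \<alpha>) (int m) (md (u \<alpha>) (- int m) b))
      = - (if m = 1 then bf (ud \<alpha>) b * bf a (u \<alpha>) else 0)
        + bf a (md (md (ud \<alpha>) 0 (u \<alpha>)) 0 b) - of_nat m * bf a b" if "\<alpha> < d" for \<alpha>
    using mode_product_weight_one[OF dual_basis_weight_one basis_weight_one assms(1) m(2), OF that that]
    by (simp add: dual_pairing that bf_add bf_diff bf_scale bf_minus)
  have "F_coeff bf md d u ud a b (-2 - j) j = (\<Sum>\<alpha><d. bf a (md (ud \<alpha>) (int m) (md (u \<alpha>) (- int m) b)))"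
  proof -
    have "- (-2 - j) - 1 = int m" "- j - 1 = - int m"
      using m(1) by simp_all
    then show ?thesis
      by (simp only: F_coeff_def)
  qed
  also have "\<dots> = - (if m = 1 then bf a b else 0) + bf a (md (\<Sum>\<alpha><d. md (ud \<alpha>) 0 (u \<alpha>)) 0 b)
      - of_nat d * (of_nat m * bf a b)"
    by (simp add: summand sum.distrib sum_subtractf sum_negf bf_sum mode_sum_left bf_dual_sum[OF assms(1)]
        if_distrib[of uminus] cong: if_cong)
  also have "\<dots> = - (of_int (j + 1) * of_nat d * bf a b) - (if j = 0 then bf a b else 0)"
  proof -
    have "(of_nat m :: complex) = of_int (j + 1)" "m = 1 \<longleftrightarrow> j = 0"
      using m(1) by (metis of_int_of_nat_eq, linarith)
    then show ?thesis
      by (simp add: casimir_mode_zero algebra_simps)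
  qed
  finally show ?thesis .
qed

end

lemma G_coeff_values:
  "G_coeff P Q R 0 = R" "G_coeff P Q R 1 = Q - 4 * R" "G_coeff P Q R 2 = P - 2 * Q + 6 * R"
  "G_coeff P Q R 3 = Q - 4 * R" "G_coeff P Q R 4 = R"
  by (simp_all add: G_coeff_def eval_nat_numeral)

lemma rat_expand_G_coeff:
  "rat_expand (G_coeff P Q R) i j =
     (if i + j \<noteq> -2 \<or> j < -2 then 0
      else if j = -2 then R
      else if j = -1 then Q - 2 * R
      else of_int (j + 1) * P + (if j = 0 then R else 0))"
proof -
  let ?g = "G_coeff P Q R"
  have sum_atMost_4: "(\<Sum>p\<le>4. f p) = f 0 + f 1 + f 2 + f 3 + f 4" for f :: "nat \<Rightarrow> complex"
    by (simp add: eval_nat_numeral atMost_Suc)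
  have "rat_expand ?g i j = (if i + j = -2 then \<Sum>p\<le>4. if 0 \<le> j - 2 + int p then ?g p * of_int (j - 1 + int p) else 0 else 0)"
    unfolding rat_expand_def Let_def by (auto intro!: sum.cong)
  also have "\<dots> = (if i + j = -2 then
      (if 0 \<le> j - 2 then R * of_int (j - 1) else 0) + (if 0 \<le> j - 1 then (Q - 4 * R) * of_int j else 0)
      + (if 0 \<le> j then (P - 2 * Q + 6 * R) * of_int (j + 1) else 0)
      + (if 0 \<le> j + 1 then (Q - 4 * R) * of_int (j + 2) else 0)
      + (if 0 \<le> j + 2 then R * of_int (j + 3) else 0) else 0)"
    unfolding sum_atMost_4 by (simp add: G_coeff_values algebra_simps flip: One_nat_def)
  also have "\<dots> = (if i + j \<noteq> -2 \<or> j < -2 then 0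
      else if j = -2 then R
      else if j = -1 then Q - 2 * R
      else of_int (j + 1) * P + (if j = 0 then R else 0))"
    by (auto simp: algebra_simps)
  finally show ?thesis .
qed

theorem proposition2:
  fixes sc :: "complex \<Rightarrow> 'v::ab_group_add \<Rightarrow> 'v"
    and md :: "'v \<Rightarrow> int \<Rightarrow> 'v \<Rightarrow> 'v"
    and one om :: 'v and C :: complex
    and bf :: "'v \<Rightarrow> 'v \<Rightarrow> complex"
    and d :: nat and u ud :: "nat \<Rightarrow> 'v" and a b :: 'v
  assumes VOA: "is_VOA sc md one om C"
    and LZ: "is_LZ_metric sc md one om bf"
    and L1: "\<forall>v \<in> wt_space sc (Vir md om 0) 1. Vir md om 1 v = 0"
    and d_pos: "d > 0"
    and u_inj: "inj_on u {..<d}"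
    and u_indep: "\<not> module.dependent sc (u ` {..<d})"
    and u_span: "module.span sc (u ` {..<d}) = wt_space sc (Vir md om 0) 1"
    and ud_in: "\<forall>i<d. ud i \<in> wt_space sc (Vir md om 0) 1"
    and dual: "\<forall>i<d. \<forall>j<d. bf (ud i) (u j) = (if i = j then 1 else 0)"
    and a_in: "a \<in> wt_space sc (Vir md om 0) 1"
    and b_in: "b \<in> wt_space sc (Vir md om 0) 1"
  shows "\<forall>i j. F_coeff bf md d u ud a b i j
           = rat_expand (G_coeff (- of_nat d * bf a b)
                                 (killing sc md om a b - 2 * bf a b)
                                 (- bf a b)) i j"
proof (intro allI)
  fix i j :: int
  interpret voa_basis sc md one om C bf d u ud
    by (intro voa_basis.intro voa.intro voa_basis_axioms.intro VOA LZ L1 u_inj u_indep u_span ud_in dual)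
  consider "i + j \<noteq> -2" | "j < -2" | "i = 0" "j = -2" | "i = -1" "j = -1" | "i = -2 - j" "0 \<le> j"
    by linarith
  then show "F_coeff bf md d u ud a b i j
      = rat_expand (G_coeff (- of_nat d * bf a b) (killing sc md om a b - 2 * bf a b) (- bf a b)) i j"
  proof cases
    case 1
    then show ?thesis by (simp add: F_coeff_off_diagonal a_in b_in rat_expand_G_coeff)
  next
    case 2
    then show ?thesis by (simp add: F_coeff_below b_in rat_expand_G_coeff)
  next
    case 3
    then show ?thesis by (simp add: F_coeff_minus_two b_in rat_expand_G_coeff)
  next
    case 4
    then show ?thesis by (simp add: F_coeff_minus_one a_in b_in rat_expand_G_coeff)
  next
    case 5
    then show ?thesis
      unfolding 5(1) F_coeff_nonnegative[OF b_in 5(2)] by (simp add: rat_expand_G_coeff algebra_simps)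
  qed
qed

end
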